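(* Let $f:\mathcal X\to\mathbb R$ be Lipschitz continuous with Lipschitz constant $|f|_1<\infty$. Then for every $\varepsilon>0$ the maximum $M_f=\max_{x\in\mathcal X}f(x)$ satisfies \[|M_f-\varepsilon L_{f/\varepsilon}|\le\varepsilon d\log(1+3d^{-1/2}|f|_1/\varepsilon),\] and the right-hand side tends to $0$ as $\varepsilon\searrow0$. Moreover, for any bounded measurable $f:\mathcal X\to\mathbb R$, any $\varepsilon>0$ and any $\delta\in(0,1]$, \[P_{f/\varepsilon}(\{x\in\mathcal X:f(x)<\varepsilon L_{f/\varepsilon}-\varepsilon\log(1/\delta)\})\le\delta.\]
   Context: $\mathcal X=[0,1]^d$ with Lebesgue measure. For bounded measurable $h$: $Z_h=\int_{\mathcal X}e^h dx$, $L_h=\log Z_h$, $P_h$ the distribution with density $e^h/Z_h$. $|f|_1$ denotes the minimal Lipschitz constant with respect to the Euclidean norm. *)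

theory Defs
  imports "HOL-Analysis.Analysis"
begin

text \<open>The unit cube X = [0,1]^d, with d = CARD('n).\<close>
definition unit_cube :: "(real ^ 'n) set" where
  "unit_cube = cbox 0 1"

definition Zpart :: "(real ^ 'n \<Rightarrow> real) \<Rightarrow> real" where
  "Zpart h = (\<integral>x \<in> unit_cube. exp (h x) \<partial>lebesgue)"

definition Lpart :: "(real ^ 'n \<Rightarrow> real) \<Rightarrow> real" where
  "Lpart h = ln (Zpart h)"

definition Pdist :: "(real ^ 'n \<Rightarrow> real) \<Rightarrow> (real ^ 'n) measure" where
  "Pdist h = density (lebesgue_on unit_cube) (\<lambda>x. ennreal (exp (h x) / Zpart h))"

definition lipconst :: "(real ^ 'n \<Rightarrow> real) \<Rightarrow> real" where
  "lipconst f = Inf {C. C-lipschitz_on unit_cube f}"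

end

theory Submission
  imports Defs "HOL-Real_Asymp.Real_Asymp"
begin

(*
  Let M be the maximum of f and K its Lipschitz constant. Since the cube has volume 1,
  Z_{f/eps} <= exp (M/eps). Conversely f >= M - K s sqrt d on a subcube of side s that
  contains a maximiser, so Z_{f/eps} >= s^d exp ((M - K s sqrt d)/eps), that is
  M - eps L_{f/eps} <= eps d (b s - ln s) with b = K/(eps sqrt d). Choosing s = min 1 (1/b)
  and using exp b <= 1 + 3 b on [0,1] and e <= 3 bounds this by eps d ln (1 + 3 b).

  The tail bound is a Markov-type estimate: where g < eps L - eps ln (1/delta), the
  density exp (g/eps) / Z is below delta, and the cube has volume 1.
*)

lemma exp_le_one_plus_three_mult:
  fixes b :: real
  assumes "0 \<le> b" "b \<le> 1"
  shows "exp b \<le> 1 + 3 * b"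
proof -
  have "exp (b / 2) \<le> 1 + b"
    using exp_bound_lemma[of "b / 2"] assms by simp
  then have "exp b \<le> (1 + b) * (1 + b)"
    using assms mult_mono[of "exp (b / 2)" "1 + b" "exp (b / 2)" "1 + b"]
    by (simp flip: exp_add)
  also have "\<dots> \<le> 1 + 3 * b"
    using mult_left_mono[of b 1 b] assms by (simp add: algebra_simps)
  finally show ?thesis .
qed

lemma ex_scale_ln_le:
  fixes b :: real
  assumes "0 \<le> b"
  obtains s where "0 < s" "s \<le> 1" "b * s - ln s \<le> ln (1 + 3 * b)"
proof (cases "b \<le> 1")
  case True
  then have "b \<le> ln (1 + 3 * b)"
    using exp_le_one_plus_three_mult[OF assms] assms by (simp add: ln_ge_iff)
  then show ?thesis
    by (intro that[of 1]) auto
next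
  case False
  have "b * (1 / b) - ln (1 / b) = ln (exp 1 * b)"
    using False by (simp add: ln_div ln_mult)
  also have "\<dots> \<le> ln (1 + 3 * b)"
  proof -
    have "exp 1 * b \<le> 3 * b"
      using False exp_le by (intro mult_right_mono) auto
    then have "exp 1 * b \<le> 1 + 3 * b"
      by linarith
    then show ?thesis
      using False by simp
  qed
  finally show ?thesis
    using False by (intro that[of "1 / b"]) auto
qed

lemma lipschitz_on_Inf:
  fixes f :: "'a::metric_space \<Rightarrow> 'b::metric_space"
  assumes "\<exists>C. C-lipschitz_on S f"
  shows "(Inf {C. C-lipschitz_on S f})-lipschitz_on S f"
proof (rule lipschitz_onI)
  let ?L = "{C. C-lipschitz_on S f}"
  have nonempty: "?L \<noteq> {}"
    using assms by auto
  show "0 \<le> Inf ?L"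
    by (rule cInf_greatest[OF nonempty]) (auto dest: lipschitz_on_nonneg)
  fix x y
  assume "x \<in> S" "y \<in> S"
  show "dist (f x) (f y) \<le> Inf ?L * dist x y"
  proof (cases "x = y")
    case False
    then have "dist (f x) (f y) / dist x y \<le> Inf ?L"
      using \<open>x \<in> S\<close> \<open>y \<in> S\<close>
      by (intro cInf_greatest[OF nonempty])
         (auto dest!: lipschitz_onD[of _ _ f x y] simp: divide_le_eq)
    then show ?thesis
      using False by (simp add: divide_le_eq mult.commute)
  qed simp
qed

lemma lipschitz_on_ge_minus:
  fixes f :: "'a::metric_space \<Rightarrow> real"
  assumes "K-lipschitz_on S f" "x \<in> S" "y \<in> S" "dist x y \<le> r"
  shows "f y - K * r \<le> f x"
proof -
  have "f y - f x \<le> K * dist x y"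
    using lipschitz_onD[OF assms(1-3)] by (simp add: dist_real_def abs_le_iff)
  also have "\<dots> \<le> K * r"
    using assms(4) lipschitz_on_nonneg[OF assms(1)] by (rule mult_left_mono)
  finally show ?thesis
    by simp
qed

lemma dist_in_cube_le:
  fixes l x y :: "real ^ 'n"
  assumes "x \<in> cbox l (l + s *\<^sub>R 1)" "y \<in> cbox l (l + s *\<^sub>R 1)"
  shows "dist x y \<le> s * sqrt (real CARD('n))"
proof -
  have "0 \<le> s"
    using assms by (auto simp: mem_box_cart)
  have "dist x y \<le> diameter (cbox l (l + s *\<^sub>R 1))"
    using assms by (intro diameter_bounded_bound) auto
  also have "\<dots> = dist l (l + s *\<^sub>R 1)"
    using \<open>0 \<le> s\<close> by (intro diameter_cbox) (auto simp: Basis_vec_def inner_add_left inner_axis)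
  also have "\<dots> = s * sqrt (real CARD('n))"
    using \<open>0 \<le> s\<close> by (simp add: dist_norm norm_vec_def L2_set_def real_sqrt_mult)
  finally show ?thesis .
qed

lemma measure_lebesgue_cube:
  fixes l :: "real ^ 'n"
  assumes "0 \<le> s"
  shows "measure lebesgue (cbox l (l + s *\<^sub>R 1)) = s ^ CARD('n)"
proof -
  have "l \<in> cbox l (l + s *\<^sub>R 1)"
    using assms by (simp add: mem_box_cart)
  then have "cbox l (l + s *\<^sub>R 1) \<noteq> {}"
    by blast
  then show ?thesis
    by (simp add: content_cbox_cart)
qed

lemma subcube_of_unit_cube:
  fixes x :: "real ^ 'n"
  assumes "x \<in> unit_cube" "0 < s" "s \<le> 1"
  obtains l where "x \<in> cbox l (l + s *\<^sub>R 1)" "cbox l (l + s *\<^sub>R 1) \<subseteq> unit_cube"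
proof
  define l :: "real ^ 'n" where "l = (\<chi> i. max 0 (x $ i - s))"
  have x: "0 \<le> x $ i" "x $ i \<le> 1" for i
    using assms by (auto simp: unit_cube_def mem_box_cart)
  show "x \<in> cbox l (l + s *\<^sub>R 1)"
    using x assms by (auto simp: l_def mem_box_cart)
  have "max 0 (x $ i - s) + s \<le> 1" for i
    using x[of i] assms by (simp add: max_def)
  then show "cbox l (l + s *\<^sub>R 1) \<subseteq> unit_cube"
    using x by (auto simp: l_def mem_box_cart unit_cube_def) (meson order_trans)
qed

lemma compact_unit_cube: "compact unit_cube"
  unfolding unit_cube_def by simp

lemma unit_cube_nonempty: "unit_cube \<noteq> {}"
proof -
  have "0 \<in> unit_cube"
    by (simp add: unit_cube_def mem_box_cart)
  then show ?thesis
    by blast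
qed

lemma unit_cube_lmeasurable: "unit_cube \<in> lmeasurable"
  unfolding unit_cube_def by simp

lemma measure_unit_cube: "measure lebesgue (unit_cube :: (real ^ 'n) set) = 1"
  using measure_lebesgue_cube[of 1 "0 :: real ^ 'n"] by (simp add: unit_cube_def)

lemma finite_measure_unit_cube: "finite_measure (lebesgue_on unit_cube)"
  using unit_cube_lmeasurable by (rule finite_measure_lebesgue_on)

lemma measure_lebesgue_on_unit_cube_subset:
  "A \<subseteq> unit_cube \<Longrightarrow> A \<in> sets lebesgue \<Longrightarrow> measure (lebesgue_on unit_cube) A = measure lebesgue A"
  using unit_cube_lmeasurable by (intro measure_restrict_space) auto

lemma measure_lebesgue_on_unit_cube:
  "measure (lebesgue_on unit_cube) (unit_cube :: (real ^ 'n) set) = 1"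
  by (metis fmeasurableD measure_lebesgue_on_unit_cube_subset measure_unit_cube order_refl
      unit_cube_lmeasurable)

lemma emeasure_lebesgue_on_unit_cube:
  "emeasure (lebesgue_on unit_cube) (unit_cube :: (real ^ 'n) set) = 1"
  by (simp add: finite_measure.emeasure_eq_measure[OF finite_measure_unit_cube]
      measure_lebesgue_on_unit_cube)

lemma continuous_on_unit_cube_measurable:
  "continuous_on unit_cube h \<Longrightarrow> h \<in> borel_measurable (lebesgue_on unit_cube)"
  using continuous_imp_measurable_on_sets_lebesgue unit_cube_lmeasurable by blast

lemma Zpart_eq_integral: "Zpart h = (\<integral>x. exp (h x) \<partial>lebesgue_on unit_cube)"
  unfolding Zpart_def set_lebesgue_integral_def
  using unit_cube_lmeasurable by (subst integral_restrict_space) auto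

lemma Zpart_le_exp:
  fixes h :: "real ^ 'n \<Rightarrow> real"
  assumes "h \<in> borel_measurable (lebesgue_on unit_cube)" "\<And>x. x \<in> unit_cube \<Longrightarrow> h x \<le> c"
  shows "Zpart h \<le> exp c"
proof -
  interpret finite_measure "lebesgue_on (unit_cube :: (real ^ 'n) set)"
    by (rule finite_measure_unit_cube)
  have "integrable (lebesgue_on unit_cube) (\<lambda>x. exp (h x))"
    using assms by (intro integrable_const_bound[where B = "exp c"]) auto
  then have "Zpart h \<le> (\<integral>x. exp c \<partial>lebesgue_on (unit_cube :: (real ^ 'n) set))"
    unfolding Zpart_eq_integral using assms(2) by (intro integral_mono) simp_all
  also have "\<dots> = exp c"
    using measure_lebesgue_on_unit_cube by simp
  finally show ?thesis .
qed

lemma exp_mult_measure_le_Zpart: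
  fixes h :: "real ^ 'n \<Rightarrow> real"
  assumes "h \<in> borel_measurable (lebesgue_on unit_cube)" "\<And>x. x \<in> unit_cube \<Longrightarrow> h x \<le> B"
    and "Q \<in> sets lebesgue" "Q \<subseteq> unit_cube" "\<And>x. x \<in> Q \<Longrightarrow> c \<le> h x"
  shows "exp c * measure lebesgue Q \<le> Zpart h"
proof -
  interpret finite_measure "lebesgue_on (unit_cube :: (real ^ 'n) set)"
    by (rule finite_measure_unit_cube)
  have Q: "Q \<in> sets (lebesgue_on unit_cube)"
    using assms(3,4) unit_cube_lmeasurable by (subst sets_restrict_space_iff) auto
  have "exp c * measure lebesgue Q = (\<integral>x. indicator Q x * exp c \<partial>lebesgue_on unit_cube)"
    using assms(4) measure_lebesgue_on_unit_cube_subset[OF assms(4,3)] by (simp add: Int_absorb2)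
  also have "\<dots> \<le> Zpart h"
    unfolding Zpart_eq_integral
  proof (rule integral_mono)
    show "integrable (lebesgue_on unit_cube) (\<lambda>x. indicator Q x * exp c)"
      using Q by (intro integrable_const_bound[where B = "exp c"]) (auto simp: indicator_def)
    show "integrable (lebesgue_on unit_cube) (\<lambda>x. exp (h x))"
      using assms(1,2) by (intro integrable_const_bound[where B = "exp B"]) auto
  qed (auto simp: indicator_def assms(5))
  finally show ?thesis .
qed

lemma Zpart_pos:
  fixes h :: "real ^ 'n \<Rightarrow> real"
  assumes "continuous_on unit_cube h"
  shows "0 < Zpart h"
proof -
  obtain B where B: "\<And>x. x \<in> unit_cube \<Longrightarrow> \<bar>h x\<bar> \<le> B"
    using compact_imp_bounded[OF compact_continuous_image[OF assms compact_unit_cube]]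
    by (auto simp: bounded_iff)
  have "exp (- B) * measure lebesgue (unit_cube :: (real ^ 'n) set) \<le> Zpart h"
  proof (rule exp_mult_measure_le_Zpart)
    show "h \<in> borel_measurable (lebesgue_on unit_cube)"
      using assms by (rule continuous_on_unit_cube_measurable)
    show "unit_cube \<in> sets lebesgue"
      using unit_cube_lmeasurable by (rule fmeasurableD)
    show "h x \<le> B" "- B \<le> h x" if "x \<in> unit_cube" for x
      using B[OF that] by linarith+
  qed simp
  then have "exp (- B) \<le> Zpart h"
    by (simp add: measure_unit_cube)
  then show ?thesis
    by (meson exp_gt_zero less_le_trans)
qed

lemma eps_Lpart_le_Sup:
  fixes f :: "real ^ 'n \<Rightarrow> real"
  assumes "continuous_on unit_cube f" "0 < \<epsilon>"
  shows "\<epsilon> * Lpart (\<lambda>x. f x / \<epsilon>) \<le> Sup (f ` unit_cube)"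
proof -
  have cont: "continuous_on unit_cube (\<lambda>x. f x / \<epsilon>)"
    using assms by (intro continuous_intros) auto
  have "bdd_above (f ` unit_cube)"
    using compact_imp_bounded[OF compact_continuous_image[OF assms(1) compact_unit_cube]]
    by (rule bounded_imp_bdd_above)
  then have "Zpart (\<lambda>x. f x / \<epsilon>) \<le> exp (Sup (f ` unit_cube) / \<epsilon>)"
    using assms(2) by (intro Zpart_le_exp continuous_on_unit_cube_measurable cont)
       (auto intro: divide_right_mono cSUP_upper)
  then have "Lpart (\<lambda>x. f x / \<epsilon>) \<le> Sup (f ` unit_cube) / \<epsilon>"
    unfolding Lpart_def using Zpart_pos[OF cont] by (metis exp_gt_zero ln_exp ln_le_cancel_iff)
  then show ?thesis
    using assms(2) by (simp add: field_simps)
qed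

lemma Sup_le_eps_Lpart:
  fixes f :: "real ^ 'n \<Rightarrow> real"
  assumes lip: "K-lipschitz_on unit_cube f" and "0 < \<epsilon>" "0 < s" "s \<le> 1"
  shows "Sup (f ` unit_cube)
           \<le> \<epsilon> * Lpart (\<lambda>x. f x / \<epsilon>) + K * s * sqrt (real CARD('n)) - \<epsilon> * CARD('n) * ln s"
proof -
  have cont: "continuous_on unit_cube f"
    using lip by (rule lipschitz_on_continuous_on)
  obtain x\<^sub>0 where x\<^sub>0: "x\<^sub>0 \<in> unit_cube" "\<And>x. x \<in> unit_cube \<Longrightarrow> f x \<le> f x\<^sub>0"
    using continuous_attains_sup[OF compact_unit_cube unit_cube_nonempty cont] by blast
  have Sup: "Sup (f ` unit_cube) = f x\<^sub>0"
    using x\<^sub>0 by (intro cSup_eq_maximum) auto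
  obtain l where l: "x\<^sub>0 \<in> cbox l (l + s *\<^sub>R 1)" "cbox l (l + s *\<^sub>R 1) \<subseteq> unit_cube"
    using subcube_of_unit_cube[OF x\<^sub>0(1) assms(3,4)] .
  define c where "c = (f x\<^sub>0 - K * s * sqrt (real CARD('n))) / \<epsilon>"
  have lower: "c \<le> f x / \<epsilon>" if x: "x \<in> cbox l (l + s *\<^sub>R 1)" for x
  proof -
    have "f x\<^sub>0 - K * (s * sqrt (real CARD('n))) \<le> f x"
      using lipschitz_on_ge_minus[OF lip _ _ dist_in_cube_le[OF x l(1)]] x l by blast
    then show ?thesis
      using assms(2) by (simp add: c_def divide_right_mono)
  qed
  have "exp c * measure lebesgue (cbox l (l + s *\<^sub>R 1)) \<le> Zpart (\<lambda>x. f x / \<epsilon>)"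
  proof (rule exp_mult_measure_le_Zpart[where B = "f x\<^sub>0 / \<epsilon>"])
    show "(\<lambda>x. f x / \<epsilon>) \<in> borel_measurable (lebesgue_on unit_cube)"
      using continuous_on_unit_cube_measurable[OF cont] by measurable
    show "f x / \<epsilon> \<le> f x\<^sub>0 / \<epsilon>" if "x \<in> unit_cube" for x
      using x\<^sub>0(2)[OF that] assms(2) by (simp add: divide_right_mono)
  qed (use l(2) lower in auto)
  then have "exp c * s ^ CARD('n) \<le> Zpart (\<lambda>x. f x / \<epsilon>)"
    using measure_lebesgue_cube[of s l] assms(3) by simp
  moreover have "0 < exp c * s ^ CARD('n)"
    using assms(3) by simp
  ultimately have "ln (exp c * s ^ CARD('n)) \<le> Lpart (\<lambda>x. f x / \<epsilon>)"
    unfolding Lpart_def by (intro ln_mono) auto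
  then have "c + CARD('n) * ln s \<le> Lpart (\<lambda>x. f x / \<epsilon>)"
    using assms(3) by (simp add: ln_mult ln_realpow)
  then show ?thesis
    unfolding Sup using assms(2) by (simp add: c_def field_simps)
qed

lemma abs_Sup_minus_eps_Lpart_le:
  fixes f :: "real ^ 'n \<Rightarrow> real"
  assumes "\<exists>C. C-lipschitz_on unit_cube f" "0 < \<epsilon>"
  shows "\<bar>Sup (f ` unit_cube) - \<epsilon> * Lpart (\<lambda>x. f x / \<epsilon>)\<bar>
           \<le> \<epsilon> * real CARD('n) * ln (1 + 3 * real CARD('n) powr (-1/2) * lipconst f / \<epsilon>)"
proof -
  define K where "K = lipconst f"
  define d where "d = real CARD('n)"
  have lip: "K-lipschitz_on unit_cube f"
    unfolding K_def lipconst_def using assms(1) by (rule lipschitz_on_Inf)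
  have "0 < d"
    by (simp add: d_def)
  define b where "b = K / (\<epsilon> * sqrt d)"
  have "0 \<le> b"
    using lipschitz_on_nonneg[OF lip] assms(2) \<open>0 < d\<close> by (simp add: b_def)
  then obtain s where s: "0 < s" "s \<le> 1" "b * s - ln s \<le> ln (1 + 3 * b)"
    by (rule ex_scale_ln_le)
  have "\<epsilon> * d * b = K * (d / sqrt d)"
    using assms(2) by (simp add: b_def)
  then have "\<epsilon> * d * b = K * sqrt d"
    using \<open>0 < d\<close> by (simp add: real_div_sqrt)
  have "\<bar>Sup (f ` unit_cube) - \<epsilon> * Lpart (\<lambda>x. f x / \<epsilon>)\<bar>
          = Sup (f ` unit_cube) - \<epsilon> * Lpart (\<lambda>x. f x / \<epsilon>)"
    using eps_Lpart_le_Sup[OF lipschitz_on_continuous_on[OF lip] assms(2)] by simp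
  also have "\<dots> \<le> K * s * sqrt d - \<epsilon> * d * ln s"
    using Sup_le_eps_Lpart[OF lip assms(2) s(1,2)] by (simp add: d_def)
  also have "\<dots> = \<epsilon> * d * (b * s - ln s)"
    using \<open>\<epsilon> * d * b = K * sqrt d\<close> by (simp add: right_diff_distrib mult.assoc[symmetric])
  also have "\<dots> \<le> \<epsilon> * d * ln (1 + 3 * b)"
    using s(3) \<open>0 < d\<close> assms(2) by (intro mult_left_mono) auto
  also have "3 * b = 3 * d powr (-1/2) * K / \<epsilon>"
    using \<open>0 < d\<close> by (simp add: b_def powr_minus powr_half_sqrt field_simps)
  finally show ?thesis
    unfolding K_def d_def .
qed

lemma tendsto_mult_ln_one_plus_div:
  fixes c d :: real
  assumes "0 \<le> c"
  shows "((\<lambda>\<epsilon>. \<epsilon> * d * ln (1 + c / \<epsilon>)) \<longlongrightarrow> 0) (at_right 0)"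
proof (cases "c = 0")
  case False
  with assms have "0 < c"
    by simp
  then show ?thesis
    by real_asymp
qed simp

lemma measure_density_le_bound:
  assumes "f \<in> borel_measurable M" "emeasure M (space M) \<le> 1" "A \<in> sets M"
    and "\<And>x. x \<in> A \<Longrightarrow> f x \<le> \<delta>" "0 \<le> \<delta>"
  shows "measure (density M (\<lambda>x. ennreal (f x))) A \<le> \<delta>"
proof -
  have "emeasure (density M (\<lambda>x. ennreal (f x))) A = (\<integral>\<^sup>+x. ennreal (f x) * indicator A x \<partial>M)"
    using assms(1,3) by (intro emeasure_density) auto
  also have "\<dots> \<le> (\<integral>\<^sup>+x. ennreal \<delta> * indicator A x \<partial>M)"
    using assms(4) by (intro nn_integral_mono) (auto simp: indicator_def intro: ennreal_leI)
  also have "\<dots> = ennreal \<delta> * emeasure M A"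
    using assms(3) by (rule nn_integral_cmult_indicator)
  also have "\<dots> \<le> ennreal \<delta>"
    using emeasure_space[of M A] assms(2)
    by (metis mult.right_neutral mult_left_mono order_trans zero_le)
  finally show ?thesis
    unfolding measure_def using assms(5) by (intro enn2real_leI) auto
qed

lemma Pdist_sublevel_le:
  fixes g :: "real ^ 'n \<Rightarrow> real"
  assumes "g \<in> borel_measurable (lebesgue_on unit_cube)" "0 < \<epsilon>" "0 < \<delta>"
  shows "measure (Pdist (\<lambda>x. g x / \<epsilon>))
           {x \<in> unit_cube. g x < \<epsilon> * Lpart (\<lambda>x. g x / \<epsilon>) - \<epsilon> * ln (1 / \<delta>)} \<le> \<delta>"
proof -
  define Z where "Z = Zpart (\<lambda>x. g x / \<epsilon>)"
  have "exp (g x / \<epsilon>) / Z \<le> \<delta>" if "g x < \<epsilon> * ln Z - \<epsilon> * ln (1 / \<delta>)" for x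
  proof (cases "0 < Z")
    case True
    then have "g x / \<epsilon> < ln (Z * \<delta>)"
      using that assms(2,3) by (simp add: ln_mult ln_div field_simps)
    then have "exp (g x / \<epsilon>) < Z * \<delta>"
      using True assms(3) by (metis exp_less_cancel_iff exp_ln mult_pos_pos)
    then show ?thesis
      using True by (simp add: pos_divide_le_eq mult.commute)
  next
    case False
    \<comment> \<open>Z is the junk value 0 when exp (g/eps) is not integrable; then the density vanishes,
      which is why g need not be bounded.\<close>
    then show ?thesis
      using assms(3) by (simp add: divide_nonneg_nonpos order.trans[of _ 0 \<delta>])
  qed
  moreover have "(\<lambda>x. exp (g x / \<epsilon>) / Z) \<in> borel_measurable (lebesgue_on unit_cube)"
    using assms(1) by measurable
  moreover have "{x \<in> space (lebesgue_on unit_cube). g x < \<epsilon> * ln Z - \<epsilon> * ln (1 / \<delta>)}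
      \<in> sets (lebesgue_on unit_cube)"
    using assms(1) by measurable
  ultimately show ?thesis
    unfolding Pdist_def Lpart_def Z_def[symmetric] using assms(3)
    by (intro measure_density_le_bound) (auto simp: emeasure_lebesgue_on_unit_cube)
qed

theorem lemma1:
  fixes f :: "real ^ 'n \<Rightarrow> real"
  assumes "\<exists>C. C-lipschitz_on unit_cube f"
  shows "(\<forall>\<epsilon>>0. \<bar>Sup (f ` unit_cube) - \<epsilon> * Lpart (\<lambda>x. f x / \<epsilon>)\<bar>
            \<le> \<epsilon> * real CARD('n) *
               ln (1 + 3 * real CARD('n) powr (-1/2) * lipconst f / \<epsilon>))
       \<and> ((\<lambda>\<epsilon>. \<epsilon> * real CARD('n) *
               ln (1 + 3 * real CARD('n) powr (-1/2) * lipconst f / \<epsilon>)) \<longlongrightarrow> 0) (at_right 0)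
       \<and> (\<forall>g :: real ^ 'n \<Rightarrow> real. g \<in> borel_measurable (lebesgue_on unit_cube) \<and> bounded (g ` unit_cube)
            \<longrightarrow> (\<forall>\<epsilon>>0. \<forall>\<delta>. 0 < \<delta> \<and> \<delta> \<le> 1 \<longrightarrow>
                  measure (Pdist (\<lambda>x. g x / \<epsilon>))
                    {x \<in> unit_cube. g x < \<epsilon> * Lpart (\<lambda>x. g x / \<epsilon>) - \<epsilon> * ln (1 / \<delta>)} \<le> \<delta>))"
proof -
  have "0 \<le> lipconst f"
    unfolding lipconst_def using lipschitz_on_Inf[OF assms] by (rule lipschitz_on_nonneg)
  then have "0 \<le> 3 * real CARD('n) powr (-1/2) * lipconst f"
    by simp
  from tendsto_mult_ln_one_plus_div[OF this] show ?thesis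
    using abs_Sup_minus_eps_Lpart_le[OF assms] Pdist_sublevel_le by blast
qed

end
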